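(* Let $(a,b)\in\mathcal{B}$ with $b$ even, $a\ge 1$, $a+b\ge 1$ and $b\neq 0$. Then $U=\{(a,b)\}$ is unavoidable.
   Context: The bicyclic inverse semigroup is $\mathcal{B}=\{(a,b)\in\mathbb{Z}\times\mathbb{Z}\mid a\ge 0,\ a+b\ge 0\}$ with multiplication $(a,b)(c,d)=(\max\{c+d,a\}-d,\ b+d)$. A subset $U\subseteq\mathcal{B}$ is called avoidable if $\mathcal{B}$ can be partitioned into two subsets $A$ and $B$ such that no element of $U$ can be written as a product $xy$ of two distinct elements $x\neq y$ both in $A$, or both in $B$. A set is unavoidable if it is not avoidable. *)

theory Defs
  imports Main
begin

definition bicyclic :: "(int \<times> int) set" where
  "bicyclic = {(a, b). a \<ge> 0 \<and> a + b \<ge> 0}"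

fun bmult :: "int \<times> int \<Rightarrow> int \<times> int \<Rightarrow> int \<times> int" where
  "bmult (a, b) (c, d) = (max (c + d) a - d, b + d)"

definition avoidable :: "(int \<times> int) set \<Rightarrow> bool" where
  "avoidable U \<longleftrightarrow> (\<exists>A B. A \<union> B = bicyclic \<and> A \<inter> B = {} \<and>
     (\<forall>x\<in>A. \<forall>y\<in>A. x \<noteq> y \<longrightarrow> bmult x y \<notin> U) \<and>
     (\<forall>x\<in>B. \<forall>y\<in>B. x \<noteq> y \<longrightarrow> bmult x y \<notin> U))"

definition unavoidable :: "(int \<times> int) set \<Rightarrow> bool" where
  "unavoidable U \<longleftrightarrow> \<not> avoidable U"

end

theory Submission
  imports Defs
begin

text \<open>Writing \<open>b = 2c\<close>, the three distinct elements \<open>x = (a, c)\<close>, \<open>y = (a + c, c)\<close> and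
  \<open>z = (r, c)\<close> with \<open>r = min a (a + c) - 1\<close> satisfy \<open>yx = yz = zx = (a, b)\<close>. In any
  partition into two parts two of them lie in the same part, so \<open>(a, b)\<close> cannot be avoided.\<close>

lemma unavoidable_if_triangle:
  assumes "x \<in> bicyclic" "y \<in> bicyclic" "z \<in> bicyclic"
    and "x \<noteq> y" "x \<noteq> z" "y \<noteq> z"
    and "bmult y x \<in> U" "bmult y z \<in> U" "bmult z x \<in> U"
  shows "unavoidable U"
  unfolding unavoidable_def avoidable_def
proof
  assume "\<exists>A B. A \<union> B = bicyclic \<and> A \<inter> B = {} \<and>
     (\<forall>x\<in>A. \<forall>y\<in>A. x \<noteq> y \<longrightarrow> bmult x y \<notin> U) \<and>
     (\<forall>x\<in>B. \<forall>y\<in>B. x \<noteq> y \<longrightarrow> bmult x y \<notin> U)"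
  then obtain A B where cover: "A \<union> B = bicyclic"
    and free_A: "\<forall>x\<in>A. \<forall>y\<in>A. x \<noteq> y \<longrightarrow> bmult x y \<notin> U"
    and free_B: "\<forall>x\<in>B. \<forall>y\<in>B. x \<noteq> y \<longrightarrow> bmult x y \<notin> U"
    by blast
  have triangle_free: "\<not> (x \<in> P \<and> y \<in> P) \<and> \<not> (y \<in> P \<and> z \<in> P) \<and> \<not> (z \<in> P \<and> x \<in> P)"
    if "\<forall>x\<in>P. \<forall>y\<in>P. x \<noteq> y \<longrightarrow> bmult x y \<notin> U" for P
    using that assms(4-9) by metis
  have "x \<in> A \<or> x \<in> B" "y \<in> A \<or> y \<in> B" "z \<in> A \<or> z \<in> B"
    using cover assms(1-3) by auto
  then show False
    using triangle_free[OF free_A] triangle_free[OF free_B] by blast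
qed

theorem proposition2p1:
  fixes a b :: int
  assumes "(a, b) \<in> bicyclic" and "even b" and "a \<ge> 1" and "a + b \<ge> 1" and "b \<noteq> 0"
  shows "unavoidable {(a, b)}"
proof -
  obtain c where b: "b = 2 * c"
    using \<open>even b\<close> by (metis evenE)
  define r where "r = min a (a + c) - 1"
  have "c \<noteq> 0"
    using b \<open>b \<noteq> 0\<close> by simp
  have "a + c \<ge> 1"
    using b \<open>a \<ge> 1\<close> \<open>a + b \<ge> 1\<close> by simp
  show ?thesis
  proof (rule unavoidable_if_triangle[of "(a, c)" "(a + c, c)" "(r, c)"])
    show "(a, c) \<in> bicyclic" "(a + c, c) \<in> bicyclic" "(r, c) \<in> bicyclic"
      using b \<open>a \<ge> 1\<close> \<open>a + b \<ge> 1\<close> \<open>a + c \<ge> 1\<close> unfolding bicyclic_def r_def by auto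
    show "(a, c) \<noteq> (a + c, c)" "(a, c) \<noteq> (r, c)" "(a + c, c) \<noteq> (r, c)"
      using \<open>c \<noteq> 0\<close> unfolding r_def by auto
    show "bmult (a + c, c) (a, c) \<in> {(a, b)}"
      using b by simp
    show "bmult (a + c, c) (r, c) \<in> {(a, b)}" "bmult (r, c) (a, c) \<in> {(a, b)}"
      using b unfolding r_def by auto
  qed
qed

end
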